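(* Let $f:D^n\to\mathbb R$. The Lovász extension $f^L:[-\alpha,1]^n\to\mathbb R$ of $f$ is convex if and only if $f$ is $\alpha$-bisubmodular.
   Context: Fix $\alpha\in(0,1]$ and $D=\{-\alpha,0,1\}\subset\mathbb R$. Define the partial order $\preceq$ on $D$ by $0\preceq 1$, $0\preceq -\alpha$ (plus reflexivity), with $1$ and $-\alpha$ incomparable; extend it componentwise to $D^n$. Define $\wedge_0$ on $D$ by $1\wedge_0(-\alpha)=(-\alpha)\wedge_0 1=0$ and $x\wedge_0 y=\min(x,y)$ w.r.t. $\preceq$ if $\{x,y\}\ne\{-\alpha,1\}$; for $a\in D$ define $\vee_a$ by $1\vee_a(-\alpha)=(-\alpha)\vee_a 1=a$ and $x\vee_a y=\max(x,y)$ w.r.t. $\preceq$ if $\{x,y\}\ne\{-\alpha,1\}$; extend componentwise to $D^n$. $f:D^n\to\mathbb R$ is $\alpha$-bisubmodular if for all $\mathbf a,\mathbf b\in D^n$: $f(\mathbf a\wedge_0\mathbf b)+\alpha f(\mathbf a\vee_0\mathbf b)+(1-\alpha)f(\mathbf a\vee_1\mathbf b)\le f(\mathbf a)+f(\mathbf b)$. For $\mathbf x\in[-\alpha,1]^n$, $\mathcal P(\mathbf x)$ is the set of $\lambda:D^n\to[0,1]$ with $\sum_{\mathbf a}\lambda(\mathbf a)=1$ and $\sum_{\mathbf a}\lambda(\mathbf a)\mathbf a=\mathbf x$. For each $\mathbf x$ there is a unique $\lambda_{\mathbf x}\in\mathcal P(\mathbf x)$ whose support is a chain w.r.t. $\preceq$;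 the Lovász extension is $f^L(\mathbf x)=\sum_{\mathbf a\in D^n}\lambda_{\mathbf x}(\mathbf a)f(\mathbf a)$. *)

theory Defs
  imports "HOL-Analysis.Analysis"
begin

definition Dom :: "real \<Rightarrow> real set" where
  "Dom \<alpha> = {-\<alpha>, 0, 1}"

definition Domn :: "real \<Rightarrow> (real ^ 'n::finite) set" where
  "Domn \<alpha> = {a. \<forall>i. a $ i \<in> Dom \<alpha>}"

definition preD :: "real \<Rightarrow> real \<Rightarrow> real \<Rightarrow> bool" where
  "preD \<alpha> x y \<longleftrightarrow> x = y \<or> (x = 0 \<and> (y = 1 \<or> y = -\<alpha>))"

definition preDn :: "real \<Rightarrow> real ^ 'n::finite \<Rightarrow> real ^ 'n \<Rightarrow> bool" where
  "preDn \<alpha> a b \<longleftrightarrow> (\<forall>i. preD \<alpha> (a $ i) (b $ i))"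

definition meet0 :: "real \<Rightarrow> real \<Rightarrow> real \<Rightarrow> real" where
  "meet0 \<alpha> x y = (if {x, y} = {-\<alpha>, 1} then 0 else (if preD \<alpha> x y then x else y))"

definition joinD :: "real \<Rightarrow> real \<Rightarrow> real \<Rightarrow> real \<Rightarrow> real" where
  "joinD \<alpha> c x y = (if {x, y} = {-\<alpha>, 1} then c else (if preD \<alpha> x y then y else x))"

definition meet0n :: "real \<Rightarrow> real ^ 'n::finite \<Rightarrow> real ^ 'n \<Rightarrow> real ^ 'n" where
  "meet0n \<alpha> a b = (\<chi> i. meet0 \<alpha> (a $ i) (b $ i))"

definition joinn :: "real \<Rightarrow> real \<Rightarrow> real ^ 'n::finite \<Rightarrow> real ^ 'n \<Rightarrow> real ^ 'n" where
  "joinn \<alpha> c a b = (\<chi> i. joinD \<alpha> c (a $ i) (b $ i))"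

definition alpha_bisubmodular :: "real \<Rightarrow> (real ^ 'n::finite \<Rightarrow> real) \<Rightarrow> bool" where
  "alpha_bisubmodular \<alpha> f \<longleftrightarrow>
     (\<forall>a\<in>Domn \<alpha>. \<forall>b\<in>Domn \<alpha>.
        f (meet0n \<alpha> a b) + \<alpha> * f (joinn \<alpha> 0 a b) + (1 - \<alpha>) * f (joinn \<alpha> 1 a b)
          \<le> f a + f b)"

definition cube :: "real \<Rightarrow> (real ^ 'n::finite) set" where
  "cube \<alpha> = {x. \<forall>i. -\<alpha> \<le> x $ i \<and> x $ i \<le> 1}"

definition Pset :: "real \<Rightarrow> real ^ 'n::finite \<Rightarrow> (real ^ 'n \<Rightarrow> real) set" where
  "Pset \<alpha> x = {lam. (\<forall>a. a \<notin> Domn \<alpha> \<longrightarrow> lam a = 0) \<and>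
                     (\<forall>a\<in>Domn \<alpha>. 0 \<le> lam a \<and> lam a \<le> 1) \<and>
                     (\<Sum>a\<in>Domn \<alpha>. lam a) = 1 \<and>
                     (\<Sum>a\<in>Domn \<alpha>. lam a *\<^sub>R a) = x}"

definition chain_supported :: "real \<Rightarrow> (real ^ 'n::finite \<Rightarrow> real) \<Rightarrow> bool" where
  "chain_supported \<alpha> lam \<longleftrightarrow>
     (\<forall>a\<in>Domn \<alpha>. \<forall>b\<in>Domn \<alpha>. lam a \<noteq> 0 \<longrightarrow> lam b \<noteq> 0 \<longrightarrow>
        preDn \<alpha> a b \<or> preDn \<alpha> b a)"

definition lam_chain :: "real \<Rightarrow> real ^ 'n::finite \<Rightarrow> (real ^ 'n \<Rightarrow> real)" where
  "lam_chain \<alpha> x = (THE lam. lam \<in> Pset \<alpha> x \<and> chain_supported \<alpha> lam)"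

definition lovasz_ext :: "real \<Rightarrow> (real ^ 'n::finite \<Rightarrow> real) \<Rightarrow> real ^ 'n \<Rightarrow> real" where
  "lovasz_ext \<alpha> f x = (\<Sum>a\<in>Domn \<alpha>. lam_chain \<alpha> x a * f a)"

end

theory Submission
  imports Defs
begin

text \<open>The chain decomposition of \<open>x\<close> is obtained by sorting the coordinates by their
  normalised size (\<open>x\<^sub>i\<close>, or \<open>-x\<^sub>i/\<alpha>\<close> when negative): chain element \<open>k\<close> carries the sign
  pattern of \<open>x\<close> on the \<open>k\<close> largest coordinates. It is unique because along any chain the
  supports are nested and the total weight of the elements containing coordinate \<open>i\<close> in their
  support is determined by \<open>x\<^sub>i\<close>.

  If \<open>f\<^sup>L\<close> is convex, evaluate it at the midpoint of \<open>a, b \<in> D\<^sup>n\<close>: that midpoint is the chain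
  combination of \<open>a \<sqinter>\<^sub>0 b \<preceq> a \<squnion>\<^sub>0 b \<preceq> a \<squnion>\<^sub>1 b\<close> with weights \<open>1/2, \<alpha>/2, (1-\<alpha>)/2\<close>, and \<open>f\<^sup>L\<close> agrees with
  \<open>f\<close> on \<open>D\<^sup>n\<close>, so convexity is exactly \<open>\<alpha>\<close>-bisubmodularity of \<open>f\<close> at \<open>a, b\<close>.

  Conversely, at a point \<open>z\<close> of the cube let \<open>g\<close> be the affine function that interpolates \<open>f\<close>
  on the maximal chain through the support of \<open>\<lambda>\<^sub>z\<close>. Affine functions are \<open>\<alpha>\<close>-modular, so
  \<open>f - g\<close> is \<open>\<alpha>\<close>-bisubmodular and vanishes on that chain, which forces \<open>f - g \<ge> 0\<close> on \<open>D\<^sup>n\<close>.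
  Hence \<open>g \<le> f\<^sup>L\<close> on the cube with equality at \<open>z\<close>: \<open>f\<^sup>L\<close> has a supporting affine minorant at
  every point and is therefore convex.\<close>

lemma finite_Domn: "finite (Domn \<alpha> :: (real^'n::finite) set)"
proof -
  have "(Domn \<alpha> :: (real^'n) set) \<subseteq> vec_lambda ` (PiE UNIV (\<lambda>_. Dom \<alpha>))"
  proof
    fix a :: "real^'n" assume "a \<in> Domn \<alpha>"
    then have "vec_nth a \<in> PiE UNIV (\<lambda>_. Dom \<alpha>)" by (auto simp: Domn_def PiE_iff)
    then show "a \<in> vec_lambda ` (PiE UNIV (\<lambda>_. Dom \<alpha>))" by (metis image_eqI vec_nth_inverse)
  qed
  moreover have "finite (PiE (UNIV::'n set) (\<lambda>_. Dom \<alpha>))" by (rule finite_PiE) (auto simp: Dom_def)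
  ultimately show ?thesis using finite_subset finite_imageI by blast
qed

lemma Domn_nth: "a \<in> Domn \<alpha> \<Longrightarrow> a $ i \<in> Dom \<alpha>"
  by (simp add: Domn_def)

lemma cube_eq_cbox: "cube \<alpha> = cbox (vec (-\<alpha>)) (vec 1)"
  by (auto simp: cube_def mem_box_cart)

lemma convex_cube: "convex (cube \<alpha>)"
  by (simp add: cube_eq_cbox)

lemma Domn_subset_cube:
  assumes "0 \<le> \<alpha>" "\<alpha> \<le> 1"
  shows "Domn \<alpha> \<subseteq> cube \<alpha>"
proof
  fix x :: "real^'n" assume "x \<in> Domn \<alpha>"
  then have x: "x $ i = -\<alpha> \<or> x $ i = 0 \<or> x $ i = 1" for i by (auto simp: Domn_def Dom_def)
  have "-\<alpha> \<le> x $ i \<and> x $ i \<le> 1" for i using x[of i] assms by auto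
  then show "x \<in> cube \<alpha>" by (simp add: cube_def)
qed

lemma meet0n_nth [simp]: "meet0n \<alpha> a b $ i = meet0 \<alpha> (a $ i) (b $ i)"
  by (simp add: meet0n_def)

lemma joinn_nth [simp]: "joinn \<alpha> c a b $ i = joinD \<alpha> c (a $ i) (b $ i)"
  by (simp add: joinn_def)

lemma meet0_joinD_combination:
  assumes "x \<in> Dom \<alpha>" "y \<in> Dom \<alpha>"
  shows "meet0 \<alpha> x y + \<alpha> * joinD \<alpha> 0 x y + (1 - \<alpha>) * joinD \<alpha> 1 x y = x + y"
  using assms by (auto simp: Dom_def meet0_def joinD_def preD_def doubleton_eq_iff algebra_simps)

lemma meet0_joinD_chain:
  assumes "0 < \<alpha>" "x \<in> Dom \<alpha>" "y \<in> Dom \<alpha>"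
  shows "preD \<alpha> (meet0 \<alpha> x y) (joinD \<alpha> 0 x y)" "preD \<alpha> (joinD \<alpha> 0 x y) (joinD \<alpha> 1 x y)"
    "preD \<alpha> (meet0 \<alpha> x y) (joinD \<alpha> 1 x y)"
  using assms by (auto simp: Dom_def meet0_def joinD_def preD_def doubleton_eq_iff)

lemma meet0_joinD_Dom:
  assumes "x \<in> Dom \<alpha>" "y \<in> Dom \<alpha>" "c \<in> Dom \<alpha>"
  shows "meet0 \<alpha> x y \<in> Dom \<alpha>" "joinD \<alpha> c x y \<in> Dom \<alpha>"
  using assms by (auto simp: Dom_def meet0_def joinD_def)

lemma meet0n_joinn_combination:
  assumes "a \<in> Domn \<alpha>" "b \<in> Domn \<alpha>"
  shows "meet0n \<alpha> a b + \<alpha> *\<^sub>R joinn \<alpha> 0 a b + (1 - \<alpha>) *\<^sub>R joinn \<alpha> 1 a b = a + b"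
  using meet0_joinD_combination[OF Domn_nth[OF assms(1)] Domn_nth[OF assms(2)]]
  by (simp add: vec_eq_iff)

lemma meet0n_joinn_Domn:
  assumes "a \<in> Domn \<alpha>" "b \<in> Domn \<alpha>"
  shows "meet0n \<alpha> a b \<in> Domn \<alpha>" "joinn \<alpha> 0 a b \<in> Domn \<alpha>" "joinn \<alpha> 1 a b \<in> Domn \<alpha>"
  using meet0_joinD_Dom[OF Domn_nth[OF assms(1)] Domn_nth[OF assms(2)]]
  by (auto simp: Domn_def Dom_def)

lemma meet0n_joinn_chain:
  assumes "0 < \<alpha>" "a \<in> Domn \<alpha>" "b \<in> Domn \<alpha>"
  shows "preDn \<alpha> (meet0n \<alpha> a b) (joinn \<alpha> 0 a b)" "preDn \<alpha> (joinn \<alpha> 0 a b) (joinn \<alpha> 1 a b)"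
    "preDn \<alpha> (meet0n \<alpha> a b) (joinn \<alpha> 1 a b)"
  using meet0_joinD_chain[OF assms(1) Domn_nth[OF assms(2)] Domn_nth[OF assms(3)]]
  by (auto simp: preDn_def)

section \<open>Uniqueness of the chain decomposition\<close>

definition coord_weight :: "real \<Rightarrow> real^'n::finite \<Rightarrow> 'n \<Rightarrow> real" where
  "coord_weight \<alpha> x i = (if 0 \<le> x $ i then x $ i else - x $ i / \<alpha>)"

definition coord_sign :: "real \<Rightarrow> real^'n::finite \<Rightarrow> 'n \<Rightarrow> real" where
  "coord_sign \<alpha> x i = (if 0 \<le> x $ i then 1 else - \<alpha>)"

lemma Pset_nth: "lam \<in> Pset \<alpha> x \<Longrightarrow> x $ i = (\<Sum>c\<in>Domn \<alpha>. lam c * c $ i)"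
  unfolding Pset_def by auto

lemma Pset_nonneg: "lam \<in> Pset \<alpha> x \<Longrightarrow> 0 \<le> lam c"
  by (cases "c \<in> Domn \<alpha>") (auto simp: Pset_def)

lemma chain_supported_nth_eq:
  assumes "chain_supported \<alpha> lam" "c \<in> Domn \<alpha>" "d \<in> Domn \<alpha>" "lam c \<noteq> 0" "lam d \<noteq> 0"
    "c $ i \<noteq> 0" "d $ i \<noteq> 0"
  shows "c $ i = d $ i"
  using assms unfolding chain_supported_def preDn_def preD_def by metis

text \<open>Along a chain, coordinate \<open>i\<close> takes only the value 0 and one nonzero value, so \<open>x\<^sub>i\<close> is
  that value times the total weight of the chain elements supported at \<open>i\<close>.\<close>
lemma chain_support_coord:
  assumes "0 < \<alpha>" "lam \<in> Pset \<alpha> x" "chain_supported \<alpha> lam"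
  shows "(\<Sum>c\<in>{c\<in>Domn \<alpha>. lam c \<noteq> 0 \<and> c $ i \<noteq> 0}. lam c) = coord_weight \<alpha> x i"
    and "\<And>c. c \<in> Domn \<alpha> \<Longrightarrow> lam c \<noteq> 0 \<Longrightarrow> c $ i \<noteq> 0 \<Longrightarrow> c $ i = coord_sign \<alpha> x i"
proof -
  define S where "S = {c\<in>Domn \<alpha>. lam c \<noteq> 0 \<and> c $ i \<noteq> 0}"
  have fin: "finite S" unfolding S_def by (rule finite_subset[OF _ finite_Domn]) auto
  have xi: "x $ i = (\<Sum>c\<in>S. lam c * c $ i)"
    unfolding Pset_nth[OF assms(2)] S_def by (rule sum.mono_neutral_right) (auto simp: finite_Domn)
  have "(\<Sum>c\<in>S. lam c) = coord_weight \<alpha> x i \<and> (\<forall>c\<in>S. c $ i = coord_sign \<alpha> x i)"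
  proof (cases "S = {}")
    case True
    then show ?thesis using xi by (simp add: coord_weight_def)
  next
    case False
    then obtain c0 where c0: "c0 \<in> S" by auto
    have same: "c $ i = c0 $ i" if "c \<in> S" for c
      using chain_supported_nth_eq[OF assms(3)] c0 that unfolding S_def by blast
    have xi2: "x $ i = c0 $ i * (\<Sum>c\<in>S. lam c)"
      unfolding xi sum_distrib_left by (rule sum.cong) (auto simp: same)
    have "lam c0 \<le> (\<Sum>c\<in>S. lam c)"
      using c0 fin Pset_nonneg[OF assms(2)] by (intro member_le_sum) auto
    moreover have "lam c0 > 0" using c0 Pset_nonneg[OF assms(2), of c0] unfolding S_def by force
    ultimately have pos: "(\<Sum>c\<in>S. lam c) > 0" by linarith
    have "c0 $ i = 1 \<or> c0 $ i = -\<alpha>" using c0 unfolding S_def Domn_def Dom_def by auto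
    then show ?thesis
    proof
      assume "c0 $ i = 1"
      then show ?thesis using xi2 pos same by (simp add: coord_weight_def coord_sign_def)
    next
      assume h: "c0 $ i = -\<alpha>"
      then have xx: "x $ i = -\<alpha> * (\<Sum>c\<in>S. lam c)" using xi2 by simp
      moreover have "\<alpha> * (\<Sum>c\<in>S. lam c) > 0" using pos assms(1) by simp
      ultimately have "x $ i < 0" by linarith
      then show ?thesis using xx same h assms(1) by (simp add: coord_weight_def coord_sign_def)
    qed
  qed
  then show "(\<Sum>c\<in>{c\<in>Domn \<alpha>. lam c \<noteq> 0 \<and> c $ i \<noteq> 0}. lam c) = coord_weight \<alpha> x i"
    and "\<And>c. c \<in> Domn \<alpha> \<Longrightarrow> lam c \<noteq> 0 \<Longrightarrow> c $ i \<noteq> 0 \<Longrightarrow> c $ i = coord_sign \<alpha> x i"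
    unfolding S_def by blast+
qed

text \<open>Supports along a chain are nested, so a coordinate of larger weight is in the support
  of every chain element whose support contains a coordinate of smaller weight.\<close>
lemma chain_support_upward:
  assumes "0 < \<alpha>" "lam \<in> Pset \<alpha> x" "chain_supported \<alpha> lam"
    and c: "c \<in> Domn \<alpha>" "lam c \<noteq> 0" "c $ i \<noteq> 0"
    and w: "coord_weight \<alpha> x i \<le> coord_weight \<alpha> x j"
  shows "c $ j \<noteq> 0"
proof
  assume cj: "c $ j = 0"
  define S where "S k = {c\<in>Domn \<alpha>. lam c \<noteq> 0 \<and> c $ k \<noteq> 0}" for k
  have fin: "finite (S k)" for k unfolding S_def by (rule finite_subset[OF _ finite_Domn]) auto
  have sub: "S j \<subseteq> S i"
  proof
    fix d assume d: "d \<in> S j"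
    then have "preDn \<alpha> c d \<or> preDn \<alpha> d c"
      using assms(3) c unfolding chain_supported_def S_def by auto
    moreover have "\<not> preD \<alpha> (d $ j) (c $ j)" using d cj unfolding preD_def S_def by auto
    then have "\<not> preDn \<alpha> d c" unfolding preDn_def by auto
    ultimately have "preD \<alpha> (c $ i) (d $ i)" unfolding preDn_def by auto
    then show "d \<in> S i" using d c(3) unfolding S_def preD_def by auto
  qed
  have "lam c \<le> (\<Sum>d\<in>S i - S j. lam d)"
    using c cj fin Pset_nonneg[OF assms(2)] by (intro member_le_sum) (auto simp: S_def)
  moreover have "lam c > 0" using c Pset_nonneg[OF assms(2), of c] by force
  moreover have "(\<Sum>d\<in>S i. lam d) = (\<Sum>d\<in>S j. lam d) + (\<Sum>d\<in>S i - S j. lam d)"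
    using sub fin by (metis add.commute sum.subset_diff)
  ultimately have "(\<Sum>d\<in>S j. lam d) < (\<Sum>d\<in>S i. lam d)" by linarith
  then show False using chain_support_coord(1)[OF assms(1-3)] w unfolding S_def by simp
qed

text \<open>Both decompositions give each coordinate the sign of \<open>x\<^sub>i\<close>, and by the previous lemma
  their supports are all ordered by the weights of the coordinates, hence by inclusion.\<close>
lemma chain_supports_comparable:
  assumes "0 < \<alpha>" "lam \<in> Pset \<alpha> x" "chain_supported \<alpha> lam"
    "mu \<in> Pset \<alpha> x" "chain_supported \<alpha> mu"
    and c: "c \<in> Domn \<alpha>" "lam c \<noteq> 0" and d: "d \<in> Domn \<alpha>" "mu d \<noteq> 0"
  shows "preDn \<alpha> c d \<or> preDn \<alpha> d c"
proof -
  have below: "preDn \<alpha> c' d'"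
    if "\<forall>k. c' $ k \<noteq> 0 \<longrightarrow> d' $ k \<noteq> 0" "c' \<in> {c, d}" "d' \<in> {c, d}" "d' \<in> Domn \<alpha>" for c' d'
    unfolding preDn_def
  proof
    fix k
    have "c' $ k \<noteq> 0 \<Longrightarrow> c' $ k = coord_sign \<alpha> x k \<and> d' $ k = coord_sign \<alpha> x k"
      using chain_support_coord(2)[OF assms(1-3) c] chain_support_coord(2)[OF assms(1,4,5) d] that
      by auto
    moreover have "d' $ k \<in> Dom \<alpha>" using \<open>d' \<in> Domn \<alpha>\<close> unfolding Domn_def by auto
    ultimately show "preD \<alpha> (c' $ k) (d' $ k)"
      unfolding preD_def Dom_def by (cases "c' $ k = 0") auto
  qed
  have "(\<forall>k. c $ k \<noteq> 0 \<longrightarrow> d $ k \<noteq> 0) \<or> (\<forall>k. d $ k \<noteq> 0 \<longrightarrow> c $ k \<noteq> 0)"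
  proof (rule ccontr)
    assume "\<not> ?thesis"
    then obtain i j where ij: "c $ i \<noteq> 0" "d $ i = 0" "d $ j \<noteq> 0" "c $ j = 0" by auto
    show False
    proof (cases "coord_weight \<alpha> x i \<le> coord_weight \<alpha> x j")
      case True
      then show False using chain_support_upward[OF assms(1-3) c ij(1)] ij by auto
    next
      case False
      then show False using chain_support_upward[OF assms(1,4,5) d ij(3)] ij by auto
    qed
  qed
  then show ?thesis using below c d by blast
qed

definition nonzero_coords :: "real^'n::finite \<Rightarrow> 'n set" where
  "nonzero_coords c = {i. c $ i \<noteq> 0}"

lemma preDn_nonzero_coords: "preDn \<alpha> c d \<Longrightarrow> nonzero_coords c \<subseteq> nonzero_coords d"
proof
  fix i assume "preDn \<alpha> c d" "i \<in> nonzero_coords c"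
  then have "preD \<alpha> (c $ i) (d $ i)" "c $ i \<noteq> 0" unfolding preDn_def nonzero_coords_def by auto
  then show "i \<in> nonzero_coords d" unfolding preD_def nonzero_coords_def by auto
qed

lemma preDn_nonzero_coords_eq: "preDn \<alpha> c d \<Longrightarrow> nonzero_coords c = nonzero_coords d \<Longrightarrow> c = d"
  unfolding vec_eq_iff preDn_def preD_def nonzero_coords_def set_eq_iff mem_Collect_eq by metis

lemma chain_has_greatest:
  assumes "finite K" "K \<noteq> {}" "\<forall>c\<in>K. \<forall>d\<in>K. preDn \<alpha> c d \<or> preDn \<alpha> d c"
  obtains c where "c \<in> K" "\<And>d. d \<in> K \<Longrightarrow> preDn \<alpha> d c"
proof -
  let ?size = "\<lambda>c. card (nonzero_coords c)"
  have "Max (?size ` K) \<in> ?size ` K" using assms(1,2) by (intro Max_in) auto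
  then obtain c where c: "c \<in> K" "?size c = Max (?size ` K)" by auto
  have "preDn \<alpha> d c" if d: "d \<in> K" for d
  proof -
    have "?size d \<le> ?size c" using d c assms(1) by simp
    moreover have "preDn \<alpha> c d \<Longrightarrow> c = d"
      using calculation by (meson card_seteq finite preDn_nonzero_coords preDn_nonzero_coords_eq)
    ultimately show ?thesis using assms(3) c(1) d unfolding preDn_def preD_def by metis
  qed
  then show thesis using that c(1) by blast
qed

text \<open>Finite chains are affinely independent: a maximal element has a nonzero
  coordinate where all other chain elements vanish.\<close>
lemma chain_affinely_independent:
  assumes "finite K" "\<forall>c\<in>K. \<forall>d\<in>K. preDn \<alpha> c d \<or> preDn \<alpha> d c"
    "(\<Sum>c\<in>K. \<nu> c) = 0" "(\<Sum>c\<in>K. \<nu> c *\<^sub>R c) = (0::real^'n::finite)"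
  shows "\<forall>c\<in>K. \<nu> c = 0"
  using assms
proof (induction K rule: finite_remove_induct)
  case empty
  then show ?case by simp
next
  case (remove K)
  obtain c where c: "c \<in> K" and cmax: "\<And>d. d \<in> K \<Longrightarrow> preDn \<alpha> d c"
    using chain_has_greatest[OF remove.hyps(1,2) remove.prems(1)] by blast
  let ?K' = "K - {c}"
  have split: "(\<Sum>d\<in>K. g d) = g c + (\<Sum>d\<in>?K'. g d)" for g :: "real^'n \<Rightarrow> 'b::comm_monoid_add"
    using remove.hyps(1) c by (simp add: sum.remove)
  have "\<nu> c = 0"
  proof (cases "?K' = {}")
    case True
    then have "K = {c}" using c by auto
    then show ?thesis using remove.prems(2) by simp
  next
    case False
    obtain d where d: "d \<in> ?K'" and dmax: "\<And>e. e \<in> ?K' \<Longrightarrow> preDn \<alpha> e d"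
      using chain_has_greatest[OF _ False, of \<alpha>] remove.hyps(1) remove.prems(1) by blast
    have "nonzero_coords d \<subset> nonzero_coords c"
      using cmax[of d] d preDn_nonzero_coords preDn_nonzero_coords_eq by blast
    then obtain i where i: "c $ i \<noteq> 0" "d $ i = 0" unfolding nonzero_coords_def by auto
    have "e $ i = 0" if "e \<in> ?K'" for e
      using preDn_nonzero_coords[OF dmax[OF that]] i(2) unfolding nonzero_coords_def by auto
    then have "0 = \<nu> c * c $ i"
      using arg_cong[OF remove.prems(3), of "\<lambda>v. v $ i"] split[of "\<lambda>d. \<nu> d *\<^sub>R d"] by simp
    then show ?thesis using i(1) by simp
  qed
  moreover have "\<forall>d\<in>?K'. \<nu> d = 0"
    using remove.IH[OF c] remove.prems split[of \<nu>] split[of "\<lambda>d. \<nu> d *\<^sub>R d"] \<open>\<nu> c = 0\<close>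
    by simp
  ultimately show ?case by blast
qed

lemma chain_decomposition_unique:
  fixes x :: "real^'n::finite"
  assumes "0 < \<alpha>" "lam \<in> Pset \<alpha> x" "chain_supported \<alpha> lam"
    "mu \<in> Pset \<alpha> x" "chain_supported \<alpha> mu"
  shows "lam = mu"
proof -
  define K where "K = {c\<in>Domn \<alpha>. lam c \<noteq> 0 \<or> mu c \<noteq> 0}"
  have finK: "finite K" unfolding K_def by (rule finite_subset[OF _ finite_Domn]) auto
  have chain: "\<forall>c\<in>K. \<forall>d\<in>K. preDn \<alpha> c d \<or> preDn \<alpha> d c"
    using assms(3,5) chain_supports_comparable[OF assms]
    unfolding K_def chain_supported_def by blast
  have restrict: "(\<Sum>c\<in>Domn \<alpha>. g c) = (\<Sum>c\<in>K. g c)" if "\<And>c. lam c = 0 \<Longrightarrow> mu c = 0 \<Longrightarrow> g c = 0"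
    for g :: "real^'n \<Rightarrow> 'b::comm_monoid_add"
    using that by (intro sum.mono_neutral_right) (auto simp: finite_Domn K_def)
  have "(\<Sum>c\<in>K. lam c - mu c) = (\<Sum>c\<in>Domn \<alpha>. lam c) - (\<Sum>c\<in>Domn \<alpha>. mu c)"
    by (subst restrict[symmetric]) (auto simp: sum_subtractf)
  also have "\<dots> = 0" using assms(2,4) unfolding Pset_def by simp
  finally have e1: "(\<Sum>c\<in>K. lam c - mu c) = 0" .
  have "(\<Sum>c\<in>K. (lam c - mu c) *\<^sub>R c) = (\<Sum>c\<in>Domn \<alpha>. lam c *\<^sub>R c) - (\<Sum>c\<in>Domn \<alpha>. mu c *\<^sub>R c)"
    by (subst restrict[symmetric]) (auto simp: sum_subtractf scaleR_left_diff_distrib)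
  also have "\<dots> = 0" using assms(2,4) unfolding Pset_def by simp
  finally have e2: "(\<Sum>c\<in>K. (lam c - mu c) *\<^sub>R c) = 0" .
  have "lam c = mu c" for c
    using chain_affinely_independent[OF finK chain e1 e2] assms(2,4)
    unfolding K_def Pset_def by (cases "c \<in> Domn \<alpha>") auto
  then show ?thesis by blast
qed

lemma lam_chain_eqI:
  assumes "0 < \<alpha>" "lam \<in> Pset \<alpha> x" "chain_supported \<alpha> lam"
  shows "lam_chain \<alpha> x = lam"
  unfolding lam_chain_def using assms chain_decomposition_unique by (intro the_equality) auto

section \<open>Existence of the chain decomposition\<close>

definition chain_point :: "('n::finite \<Rightarrow> real) \<Rightarrow> (nat \<Rightarrow> 'n) \<Rightarrow> nat \<Rightarrow> real^'n" where
  "chain_point s p k = (\<chi> i. if i \<in> p ` {..<k} then s i else 0)"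

text \<open>For \<open>w \<circ> p\<close> decreasing, the levels are 1, the weights in decreasing order, and 0;
  chain point \<open>k\<close> receives the drop from level \<open>k\<close> to level \<open>k + 1\<close>.\<close>
definition chain_level :: "('n::finite \<Rightarrow> real) \<Rightarrow> (nat \<Rightarrow> 'n) \<Rightarrow> nat \<Rightarrow> real" where
  "chain_level w p k = (if k = 0 then 1 else if k \<le> CARD('n) then w (p (k - 1)) else 0)"

definition chain_weights ::
    "('n::finite \<Rightarrow> real) \<Rightarrow> ('n \<Rightarrow> real) \<Rightarrow> (nat \<Rightarrow> 'n) \<Rightarrow> real^'n \<Rightarrow> real" where
  "chain_weights s w p a =
     (\<Sum>k\<le>CARD('n). if a = chain_point s p k then chain_level w p k - chain_level w p (Suc k) else 0)"

lemma sorted_enumeration: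
  fixes w :: "'n::finite \<Rightarrow> real"
  obtains p where "bij_betw p {..<CARD('n)} UNIV"
    "\<And>j j'. j \<le> j' \<Longrightarrow> j' < CARD('n) \<Longrightarrow> w (p j') \<le> w (p j)"
proof -
  obtain xs :: "'n list" where xs: "distinct xs" "set xs = UNIV"
    using finite_distinct_list[of "UNIV::'n set"] by auto
  define ys where "ys = sort_key (\<lambda>i. - w i) xs"
  have ys: "distinct ys" "set ys = UNIV" using xs unfolding ys_def by auto
  have len: "length ys = CARD('n)" using distinct_card[OF ys(1)] ys(2) by simp
  have srt: "sorted (map (\<lambda>i. - w i) ys)" unfolding ys_def by (rule sorted_sort_key)
  have "w (ys ! j') \<le> w (ys ! j)" if "j \<le> j'" "j' < CARD('n)" for j j'
    using sorted_nth_mono[OF srt, of j j'] that len by simp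
  moreover have "bij_betw ((!) ys) {..<CARD('n)} UNIV" using bij_betw_nth[OF ys(1)] len ys(2) by simp
  ultimately show thesis using that by blast
qed

lemma chain_point_Domn: "(\<And>i. s i \<in> Dom \<alpha>) \<Longrightarrow> chain_point s p k \<in> Domn \<alpha>"
  unfolding chain_point_def Domn_def by (auto simp: Dom_def)

lemma chain_point_mono:
  "k \<le> l \<Longrightarrow> (\<And>i. preD \<alpha> 0 (s i)) \<Longrightarrow> preDn \<alpha> (chain_point s p k) (chain_point s p l)"
  unfolding preDn_def chain_point_def by (auto simp: preD_def)

lemma chain_point_nth:
  assumes "inj_on p {..<CARD('n::finite)}" "q < CARD('n)" "k \<le> CARD('n)"
  shows "(chain_point s p k :: real^'n) $ p q = (if q < k then s (p q) else 0)"
proof -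
  have "p q \<in> p ` {..<k} \<longleftrightarrow> q < k"
    using assms inj_on_eq_iff[OF assms(1)] by force
  then show ?thesis unfolding chain_point_def by simp
qed

lemma sum_chain_weights:
  fixes \<phi> :: "real^'n::finite \<Rightarrow> 'b::real_vector"
  assumes "\<And>k. chain_point s p k \<in> Domn \<alpha>"
  shows "(\<Sum>a\<in>Domn \<alpha>. chain_weights s w p a *\<^sub>R \<phi> a) =
         (\<Sum>k\<le>CARD('n). (chain_level w p k - chain_level w p (Suc k)) *\<^sub>R \<phi> (chain_point s p k))"
proof -
  have "(\<Sum>a\<in>Domn \<alpha>. chain_weights s w p a *\<^sub>R \<phi> a) =
        (\<Sum>k\<le>CARD('n). \<Sum>a\<in>Domn \<alpha>. if a = chain_point s p k
           then (chain_level w p k - chain_level w p (Suc k)) *\<^sub>R \<phi> a else 0)"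
    unfolding chain_weights_def scaleR_sum_left by (subst sum.swap) (intro sum.cong refl; simp)
  also have "\<dots> = (\<Sum>k\<le>CARD('n). (chain_level w p k - chain_level w p (Suc k)) *\<^sub>R \<phi> (chain_point s p k))"
    using assms by (simp add: sum.delta[OF finite_Domn])
  finally show ?thesis .
qed

lemma chain_weights_support:
  "chain_weights s w p a \<noteq> 0 \<Longrightarrow> \<exists>k\<le>CARD('n::finite). a = chain_point s p k"
  for a :: "real^'n"
  unfolding chain_weights_def by (rule ccontr) (simp add: sum.neutral)

lemma sum_telescope_from:
  fixes F :: "nat \<Rightarrow> 'a::ab_group_add"
  shows "q \<le> N \<Longrightarrow> (\<Sum>k\<le>N. if q < k then F k - F (Suc k) else 0) = F (Suc q) - F (Suc N)"
  by (induction N) (auto simp: le_Suc_eq)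

lemma chain_level_antimono:
  fixes w :: "'n::finite \<Rightarrow> real"
  assumes "\<And>j j'. j \<le> j' \<Longrightarrow> j' < CARD('n) \<Longrightarrow> w (p j') \<le> w (p j)"
    and "\<And>i. 0 \<le> w i \<and> w i \<le> 1"
  shows "chain_level w p (Suc k) \<le> chain_level w p k"
  using assms(1)[of "k - 1" k] assms(2)[of "p (k - 1)"] assms(2)[of "p k"]
  unfolding chain_level_def by auto

lemma chain_weights_decomposition:
  fixes w s :: "'n::finite \<Rightarrow> real"
  assumes p: "bij_betw p {..<CARD('n)} UNIV"
    and sorted: "\<And>j j'. j \<le> j' \<Longrightarrow> j' < CARD('n) \<Longrightarrow> w (p j') \<le> w (p j)"
    and w01: "\<And>i. 0 \<le> w i \<and> w i \<le> 1" and s: "\<And>i. s i = 1 \<or> s i = -\<alpha>"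
  shows "chain_weights s w p \<in> Pset \<alpha> (\<chi> i. s i * w i)"
    and "chain_supported \<alpha> (chain_weights s w p)"
proof -
  let ?N = "CARD('n)" and ?lam = "chain_weights s w p" and ?u = "chain_level w p"
  have in_Domn: "chain_point s p k \<in> Domn \<alpha>" for k
    by (rule chain_point_Domn) (use s in \<open>auto simp: Dom_def\<close>)
  have drop_nonneg: "0 \<le> ?u k - ?u (Suc k)" for k
    using chain_level_antimono[of w p, OF sorted w01] by simp
  have total: "(\<Sum>k\<le>?N. ?u k - ?u (Suc k)) = 1"
    by (subst sum_telescope) (simp add: chain_level_def)
  have "0 \<le> ?lam a" "?lam a \<le> 1" for a
  proof -
    show "0 \<le> ?lam a" unfolding chain_weights_def using drop_nonneg by (intro sum_nonneg) auto
    have "?lam a \<le> (\<Sum>k\<le>?N. ?u k - ?u (Suc k))"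
      unfolding chain_weights_def using drop_nonneg by (intro sum_mono) auto
    then show "?lam a \<le> 1" using total by simp
  qed
  moreover have "a \<notin> Domn \<alpha> \<Longrightarrow> ?lam a = 0" for a
    using chain_weights_support in_Domn by blast
  moreover have "(\<Sum>a\<in>Domn \<alpha>. ?lam a) = 1"
    using sum_chain_weights[OF in_Domn, of w "\<lambda>_. 1::real"] total by simp
  moreover have "(\<Sum>a\<in>Domn \<alpha>. ?lam a *\<^sub>R a) = (\<chi> i. s i * w i)"
  proof (rule vec_eq_iff[THEN iffD2], rule allI)
    fix i
    obtain q where q: "q < ?N" "p q = i" using p unfolding bij_betw_def by (metis imageE lessThan_iff UNIV_I)
    have inj: "inj_on p {..<?N}" using p unfolding bij_betw_def by simp
    have "(\<Sum>a\<in>Domn \<alpha>. ?lam a *\<^sub>R a) $ i = (\<Sum>k\<le>?N. (?u k - ?u (Suc k)) * chain_point s p k $ i)"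
      using sum_chain_weights[OF in_Domn, of w "\<lambda>a. a"] by simp
    also have "\<dots> = s i * (\<Sum>k\<le>?N. if q < k then ?u k - ?u (Suc k) else 0)"
      unfolding sum_distrib_left using chain_point_nth[OF inj q(1)] q by (intro sum.cong refl) auto
    also have "\<dots> = s i * w i"
      using q by (simp add: sum_telescope_from chain_level_def)
    finally show "(\<Sum>a\<in>Domn \<alpha>. ?lam a *\<^sub>R a) $ i = (\<chi> i. s i * w i) $ i" by simp
  qed
  ultimately show "?lam \<in> Pset \<alpha> (\<chi> i. s i * w i)" unfolding Pset_def by auto
  have s0: "preD \<alpha> 0 (s i)" for i using s[of i] by (auto simp: preD_def)
  have "preDn \<alpha> (chain_point s p k) (chain_point s p l) \<or> preDn \<alpha> (chain_point s p l) (chain_point s p k)"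
    for k l using chain_point_mono[of k l \<alpha> s p, OF _ s0] chain_point_mono[of l k \<alpha> s p, OF _ s0]
    by (cases "k \<le> l") auto
  then show "chain_supported \<alpha> ?lam"
    unfolding chain_supported_def using chain_weights_support by metis
qed

lemma lam_chain_eq_chain_weights:
  fixes x :: "real^'n::finite"
  assumes "0 < \<alpha>" "x \<in> cube \<alpha>"
  obtains p where "bij_betw p {..<CARD('n)} UNIV"
    "lam_chain \<alpha> x = chain_weights (coord_sign \<alpha> x) (coord_weight \<alpha> x) p"
    "lam_chain \<alpha> x \<in> Pset \<alpha> x"
proof -
  obtain p where p: "bij_betw p {..<CARD('n)} UNIV"
    and sorted: "\<And>j j'. j \<le> j' \<Longrightarrow> j' < CARD('n) \<Longrightarrow> coord_weight \<alpha> x (p j') \<le> coord_weight \<alpha> x (p j)"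
    using sorted_enumeration by blast
  have w01: "0 \<le> coord_weight \<alpha> x i \<and> coord_weight \<alpha> x i \<le> 1" for i
    using assms unfolding coord_weight_def cube_def by (auto simp: field_simps)
  have s: "coord_sign \<alpha> x i = 1 \<or> coord_sign \<alpha> x i = -\<alpha>" for i
    by (simp add: coord_sign_def)
  have x: "(\<chi> i. coord_sign \<alpha> x i * coord_weight \<alpha> x i) = x"
    using assms(1) by (simp add: vec_eq_iff coord_sign_def coord_weight_def)
  note decomposition = chain_weights_decomposition[where w = "coord_weight \<alpha> x" and s = "coord_sign \<alpha> x", OF p sorted w01 s]
  have "chain_weights (coord_sign \<alpha> x) (coord_weight \<alpha> x) p \<in> Pset \<alpha> x"
    "chain_supported \<alpha> (chain_weights (coord_sign \<alpha> x) (coord_weight \<alpha> x) p)"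
    using decomposition x by simp_all
  moreover from this have "lam_chain \<alpha> x = chain_weights (coord_sign \<alpha> x) (coord_weight \<alpha> x) p"
    by (rule lam_chain_eqI[OF assms(1)])
  ultimately show thesis using that[OF p] by simp
qed

section \<open>Convexity implies \<open>\<alpha>\<close>-bisubmodularity\<close>

lemma lovasz_ext_Domn:
  fixes a :: "real^'n::finite"
  assumes "0 < \<alpha>" "a \<in> Domn \<alpha>"
  shows "lovasz_ext \<alpha> f a = f a"
proof -
  define d where "d = (\<lambda>e. if e = a then (1::real) else 0)"
  have "d \<in> Pset \<alpha> a" unfolding Pset_def d_def using assms(2)
    by (auto simp: finite_Domn if_distrib[of "\<lambda>t. t *\<^sub>R _"] cong: if_cong)
  moreover have "chain_supported \<alpha> d" unfolding chain_supported_def d_def preDn_def preD_def by auto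
  ultimately have "lam_chain \<alpha> a = d" by (rule lam_chain_eqI[OF assms(1)])
  then show ?thesis unfolding lovasz_ext_def d_def using assms(2)
    by (simp add: finite_Domn if_distrib[of "\<lambda>t. t * _"] cong: if_cong)
qed

lemma lovasz_ext_midpoint:
  fixes a b :: "real^'n::finite"
  assumes "0 < \<alpha>" "\<alpha> \<le> 1" "a \<in> Domn \<alpha>" "b \<in> Domn \<alpha>"
  shows "lovasz_ext \<alpha> f ((1/2) *\<^sub>R a + (1/2) *\<^sub>R b) =
    (f (meet0n \<alpha> a b) + \<alpha> * f (joinn \<alpha> 0 a b) + (1 - \<alpha>) * f (joinn \<alpha> 1 a b)) / 2"
proof -
  define m where "m = meet0n \<alpha> a b"
  define j0 where "j0 = joinn \<alpha> 0 a b"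
  define j1 where "j1 = joinn \<alpha> 1 a b"
  have in_Domn: "m \<in> Domn \<alpha>" "j0 \<in> Domn \<alpha>" "j1 \<in> Domn \<alpha>"
    unfolding m_def j0_def j1_def using meet0n_joinn_Domn[OF assms(3,4)] by auto
  define mu where "mu e = (if e = m then 1/2 else 0) + (if e = j0 then \<alpha>/2 else 0)
      + (if e = j1 then (1 - \<alpha>)/2 else (0::real))" for e
  have sum_mu: "(\<Sum>e\<in>Domn \<alpha>. mu e *\<^sub>R g e) = (1/2) *\<^sub>R g m + (\<alpha>/2) *\<^sub>R g j0 + ((1 - \<alpha>)/2) *\<^sub>R g j1"
    for g :: "real^'n \<Rightarrow> 'b::real_vector"
    unfolding mu_def scaleR_add_left sum.distrib using in_Domn
    by (simp add: finite_Domn if_distrib[of "\<lambda>t. t *\<^sub>R _"] cong: if_cong)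
  have "mu \<in> Pset \<alpha> ((1/2) *\<^sub>R a + (1/2) *\<^sub>R b)" unfolding Pset_def
  proof (intro CollectI conjI allI ballI impI)
    show "mu e = 0" if "e \<notin> Domn \<alpha>" for e using that in_Domn unfolding mu_def by auto
    show "0 \<le> mu e" "mu e \<le> 1" for e unfolding mu_def using assms(1,2) by (auto simp: field_simps)
    show "(\<Sum>e\<in>Domn \<alpha>. mu e) = 1" using sum_mu[of "\<lambda>_. 1::real"] by (simp add: field_simps)
    have "(\<Sum>e\<in>Domn \<alpha>. mu e *\<^sub>R e) = (1/2) *\<^sub>R (m + \<alpha> *\<^sub>R j0 + (1 - \<alpha>) *\<^sub>R j1)"
      using sum_mu[of "\<lambda>e. e"] by (simp add: scaleR_add_right)
    then show "(\<Sum>e\<in>Domn \<alpha>. mu e *\<^sub>R e) = (1/2) *\<^sub>R a + (1/2) *\<^sub>R b"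
      unfolding m_def j0_def j1_def meet0n_joinn_combination[OF assms(3,4)] by (simp add: scaleR_add_right)
  qed
  moreover have "chain_supported \<alpha> mu" unfolding chain_supported_def
  proof (intro ballI impI)
    fix c d assume "mu c \<noteq> 0" "mu d \<noteq> 0"
    then have "c \<in> {m, j0, j1}" "d \<in> {m, j0, j1}" unfolding mu_def by (auto split: if_splits)
    moreover have "preDn \<alpha> e e" for e unfolding preDn_def preD_def by auto
    ultimately show "preDn \<alpha> c d \<or> preDn \<alpha> d c"
      using meet0n_joinn_chain[OF assms(1,3,4)] unfolding m_def j0_def j1_def by auto
  qed
  ultimately have "lam_chain \<alpha> ((1/2) *\<^sub>R a + (1/2) *\<^sub>R b) = mu" by (rule lam_chain_eqI[OF assms(1)])
  then show ?thesis using sum_mu[of f] unfolding lovasz_ext_def m_def j0_def j1_def by simp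
qed

lemma convex_imp_alpha_bisubmodular:
  fixes f :: "real^'n::finite \<Rightarrow> real"
  assumes "0 < \<alpha>" "\<alpha> \<le> 1" "convex_on (cube \<alpha>) (lovasz_ext \<alpha> f)"
  shows "alpha_bisubmodular \<alpha> f"
  unfolding alpha_bisubmodular_def
proof (intro ballI)
  fix a b :: "real^'n" assume ab: "a \<in> Domn \<alpha>" "b \<in> Domn \<alpha>"
  then have "a \<in> cube \<alpha>" "b \<in> cube \<alpha>" using Domn_subset_cube[of \<alpha>] assms(1,2) by auto
  then have "lovasz_ext \<alpha> f ((1/2) *\<^sub>R a + (1/2) *\<^sub>R b) \<le> (1/2) * lovasz_ext \<alpha> f a + (1/2) * lovasz_ext \<alpha> f b"
    using convex_onD[OF assms(3), of "1/2" a b] by simp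
  then show "f (meet0n \<alpha> a b) + \<alpha> * f (joinn \<alpha> 0 a b) + (1 - \<alpha>) * f (joinn \<alpha> 1 a b) \<le> f a + f b"
    unfolding lovasz_ext_midpoint[OF assms(1,2) ab] lovasz_ext_Domn[OF assms(1) ab(1)]
      lovasz_ext_Domn[OF assms(1) ab(2)] by simp
qed

section \<open>\<open>\<alpha>\<close>-bisubmodularity implies convexity\<close>

definition sign_compatible :: "('n::finite \<Rightarrow> real) \<Rightarrow> real^'n \<Rightarrow> bool" where
  "sign_compatible s a \<longleftrightarrow> (\<forall>i. a $ i = 0 \<or> a $ i = s i)"

lemma meet0_joinD_same_sign:
  assumes "0 < \<alpha>" "s = 1 \<or> s = -\<alpha>" "x = 0 \<or> x = s" "y = 0 \<or> y = s"
  shows "meet0 \<alpha> x y = (if x = s \<and> y = s then s else 0)"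
    and "joinD \<alpha> c x y = (if x = s \<or> y = s then s else 0)"
  using assms(2-4) by (elim disjE; use assms(1) in \<open>simp add: meet0_def joinD_def preD_def doubleton_eq_iff\<close>)+

lemma meet0_joinD_sign:
  assumes "0 < \<alpha>" "x \<in> Dom \<alpha>" "s = 1 \<or> s = -\<alpha>"
  shows "meet0 \<alpha> x s = 0 \<or> meet0 \<alpha> x s = s"
    and "joinD \<alpha> 0 x s = 0 \<or> joinD \<alpha> 0 x s = s"
    and "joinD \<alpha> 1 (joinD \<alpha> 1 x s) s = joinD \<alpha> 1 x s"
  using assms by (auto simp: Dom_def meet0_def joinD_def preD_def doubleton_eq_iff algebra_simps)

lemma sign_compatible_Domn:
  assumes "sign_compatible s a" "\<And>i. s i = 1 \<or> s i = -\<alpha>"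
  shows "a \<in> Domn \<alpha>"
proof -
  have "a $ i \<in> Dom \<alpha>" for i
    using assms(1) assms(2)[of i] unfolding sign_compatible_def Dom_def by (cases "a $ i = 0") auto
  then show ?thesis unfolding Domn_def by auto
qed

text \<open>Induction on the support: for \<open>a\<close> supported in the first \<open>k + 1\<close> coordinates of the chain,
  bisubmodularity at \<open>a\<close> and chain point \<open>k\<close> bounds \<open>h a\<close> below by \<open>h\<close> at the meet, which is
  supported in the first \<open>k\<close> coordinates, plus \<open>h\<close> at the joins, which are chain points.\<close>
lemma alpha_bisubmodular_nonneg_sign_compatible:
  fixes h :: "real^'n::finite \<Rightarrow> real"
  assumes "0 < \<alpha>" and bisub: "alpha_bisubmodular \<alpha> h"
    and s: "\<And>i. s i = 1 \<or> s i = -\<alpha>"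
    and chain_zero: "\<And>k. k \<le> CARD('n) \<Longrightarrow> h (chain_point s p k) = 0"
    and p: "bij_betw p {..<CARD('n)} UNIV" and a: "sign_compatible s a"
  shows "0 \<le> h a"
proof -
  have s0: "s i \<noteq> 0" for i using s[of i] assms(1) by auto
  have compat_chain: "sign_compatible s (chain_point s p k)" for k
    unfolding sign_compatible_def chain_point_def by auto
  have "0 \<le> h a" if "k \<le> CARD('n)" "sign_compatible s a" "\<forall>i. a $ i \<noteq> 0 \<longrightarrow> i \<in> p ` {..<k}" for k a
    using that
  proof (induction k arbitrary: a)
    case 0
    then have "a = chain_point s p 0" by (simp add: vec_eq_iff chain_point_def)
    then show ?case using chain_zero by simp
  next
    case (Suc k)
    define c where "c = chain_point s p k"
    have ai: "a $ i = 0 \<or> a $ i = s i" for i using Suc.prems(2) unfolding sign_compatible_def by auto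
    have ci: "c $ i = 0 \<or> c $ i = s i" for i using compat_chain unfolding sign_compatible_def c_def by auto
    have c_nth: "c $ i = (if i \<in> p ` {..<k} then s i else 0)" for i unfolding c_def chain_point_def by simp
    define m where "m = meet0n \<alpha> a c"
    define J where "J = joinn \<alpha> 0 a c"
    have m_nth: "m $ i = (if a $ i = s i \<and> c $ i = s i then s i else 0)" for i
      unfolding m_def using meet0_joinD_same_sign(1)[OF assms(1) s ai ci] by simp
    have J_nth: "J $ i = (if a $ i = s i \<or> c $ i = s i then s i else 0)" for i
      unfolding J_def using meet0_joinD_same_sign(2)[OF assms(1) s ai ci] by simp
    have J1: "joinn \<alpha> 1 a c = J"
      unfolding vec_eq_iff J_def using meet0_joinD_same_sign(2)[OF assms(1) s ai ci] by simp
    have "0 \<le> h m"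
    proof (rule Suc.IH)
      show "k \<le> CARD('n)" using Suc.prems(1) by simp
      show "sign_compatible s m" unfolding sign_compatible_def m_nth by auto
      show "\<forall>i. m $ i \<noteq> 0 \<longrightarrow> i \<in> p ` {..<k}" unfolding m_nth c_nth using s0 by auto
    qed
    moreover have "J = chain_point s p (if a $ p k = s (p k) then Suc k else k)"
      unfolding vec_eq_iff J_nth c_nth chain_point_def
      using Suc.prems(3) ai s0 by (auto simp: lessThan_Suc) metis
    then have "h J = 0" using chain_zero Suc.prems(1) by simp
    moreover have "h c = 0" unfolding c_def using chain_zero Suc.prems(1) by simp
    moreover have "h m + \<alpha> * h J + (1 - \<alpha>) * h (joinn \<alpha> 1 a c) \<le> h a + h c"
      using bisub sign_compatible_Domn[OF Suc.prems(2) s] sign_compatible_Domn[OF compat_chain s]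
      unfolding alpha_bisubmodular_def m_def J_def c_def by blast
    ultimately show ?case using J1 by (simp add: algebra_simps)
  qed
  moreover have "p ` {..<CARD('n)} = UNIV" using p unfolding bij_betw_def by simp
  ultimately show ?thesis using a by blast
qed

lemma alpha_bisubmodular_nonneg:
  fixes h :: "real^'n::finite \<Rightarrow> real"
  assumes "0 < \<alpha>" "\<alpha> \<le> 1" and bisub: "alpha_bisubmodular \<alpha> h"
    and s: "\<And>i. s i = 1 \<or> s i = -\<alpha>"
    and chain_zero: "\<And>k. k \<le> CARD('n) \<Longrightarrow> h (chain_point s p k) = 0"
    and p: "bij_betw p {..<CARD('n)} UNIV" and a: "a \<in> Domn \<alpha>"
  shows "0 \<le> h a"
proof -
  note compat_nonneg = alpha_bisubmodular_nonneg_sign_compatible[OF assms(1) bisub s chain_zero p]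
  have bisubI: "h (meet0n \<alpha> a b) + \<alpha> * h (joinn \<alpha> 0 a b) + (1 - \<alpha>) * h (joinn \<alpha> 1 a b) \<le> h a + h b"
    if "a \<in> Domn \<alpha>" "b \<in> Domn \<alpha>" for a b
    using bisub that unfolding alpha_bisubmodular_def by blast
  define T where "T = chain_point s p CARD('n)"
  have "p ` {..<CARD('n)} = UNIV" using p unfolding bij_betw_def by simp
  then have T_nth: "T $ i = s i" for i unfolding T_def chain_point_def by simp
  have T: "T \<in> Domn \<alpha>" "h T = 0" unfolding T_def
    using chain_point_Domn[of s \<alpha>] s chain_zero by (auto simp: Dom_def)
  have against_T: "sign_compatible s (meet0n \<alpha> b T) \<and> sign_compatible s (joinn \<alpha> 0 b T)
      \<and> joinn \<alpha> 1 b T \<in> Domn \<alpha> \<and> joinn \<alpha> 1 (joinn \<alpha> 1 b T) T = joinn \<alpha> 1 b T"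
    if "b \<in> Domn \<alpha>" for b
    using meet0_joinD_sign[OF assms(1) Domn_nth[OF that] s] meet0n_joinn_Domn(3)[OF that T(1)]
    unfolding sign_compatible_def vec_eq_iff by (auto simp: T_nth)
  \<comment> \<open>Bisubmodularity at \<open>(a \<squnion>\<^sub>1 T, T)\<close> gives \<open>h (a \<squnion>\<^sub>1 T) \<ge> 0\<close>, then at \<open>(a, T)\<close> it gives \<open>h a \<ge> 0\<close>.\<close>
  define j where "j = joinn \<alpha> 1 a T"
  have j: "j \<in> Domn \<alpha>" "joinn \<alpha> 1 j T = j" using against_T[OF a] unfolding j_def by auto
  have "h (meet0n \<alpha> j T) + \<alpha> * h (joinn \<alpha> 0 j T) \<le> \<alpha> * h j"
    using bisubI[OF j(1) T(1)] j(2) T(2) by (simp add: algebra_simps)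
  moreover have "0 \<le> h (meet0n \<alpha> j T)" "0 \<le> \<alpha> * h (joinn \<alpha> 0 j T)"
    using against_T[OF j(1)] compat_nonneg assms(1) by auto
  ultimately have "0 \<le> \<alpha> * h j" by linarith
  then have "0 \<le> (1 - \<alpha>) * h j" using assms(1,2) by (simp add: zero_le_mult_iff)
  moreover have "0 \<le> h (meet0n \<alpha> a T)" "0 \<le> \<alpha> * h (joinn \<alpha> 0 a T)"
    using against_T[OF a] compat_nonneg assms(1) by auto
  ultimately show ?thesis using bisubI[OF a T(1)] T(2) unfolding j_def by linarith
qed

lemma Pset_affine_mean:
  assumes "linear l" "lam \<in> Pset \<alpha> y"
  shows "(\<Sum>a\<in>Domn \<alpha>. lam a * (K + l a)) = K + l y"
proof -
  have "(\<Sum>a\<in>Domn \<alpha>. lam a * (K + l a)) = K * (\<Sum>a\<in>Domn \<alpha>. lam a) + l (\<Sum>a\<in>Domn \<alpha>. lam a *\<^sub>R a)"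
    by (simp add: algebra_simps sum.distrib sum_distrib_left linear_sum[OF assms(1)]
        linear_scale[OF assms(1)])
  then show ?thesis using assms(2) unfolding Pset_def by simp
qed

lemma alpha_bisubmodular_minus_affine:
  fixes f :: "real^'n::finite \<Rightarrow> real"
  assumes "alpha_bisubmodular \<alpha> f" "linear l"
  shows "alpha_bisubmodular \<alpha> (\<lambda>y. f y - (K + l y))"
  unfolding alpha_bisubmodular_def
proof (intro ballI)
  fix a b :: "real^'n" assume ab: "a \<in> Domn \<alpha>" "b \<in> Domn \<alpha>"
  let ?m = "meet0n \<alpha> a b" and ?j0 = "joinn \<alpha> 0 a b" and ?j1 = "joinn \<alpha> 1 a b"
  have "l ?m + \<alpha> * l ?j0 + (1 - \<alpha>) * l ?j1 = l a + l b"
    using arg_cong[OF meet0n_joinn_combination[OF ab], of l]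
    by (simp add: linear_add[OF assms(2)] linear_scale[OF assms(2)])
  moreover have "f ?m + \<alpha> * f ?j0 + (1 - \<alpha>) * f ?j1 \<le> f a + f b"
    using assms(1) ab unfolding alpha_bisubmodular_def by blast
  moreover have "f ?m - (K + l ?m) + \<alpha> * (f ?j0 - (K + l ?j0)) + (1 - \<alpha>) * (f ?j1 - (K + l ?j1))
      = (f ?m + \<alpha> * f ?j0 + (1 - \<alpha>) * f ?j1) - (l ?m + \<alpha> * l ?j0 + (1 - \<alpha>) * l ?j1) - 2 * K"
    by (simp add: algebra_simps)
  ultimately show "f ?m - (K + l ?m) + \<alpha> * (f ?j0 - (K + l ?j0)) + (1 - \<alpha>) * (f ?j1 - (K + l ?j1))
      \<le> f a - (K + l a) + (f b - (K + l b))"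
    by linarith
qed

lemma convex_on_if_supporting_affine:
  fixes F :: "'a::real_vector \<Rightarrow> real"
  assumes "convex S"
    and "\<And>z. z \<in> S \<Longrightarrow> \<exists>K l. linear l \<and> (\<forall>y\<in>S. K + l y \<le> F y) \<and> K + l z = F z"
  shows "convex_on S F"
proof (rule convex_onI[OF _ assms(1)])
  fix t :: real and x y assume t: "0 < t" "t < 1" and xy: "x \<in> S" "y \<in> S"
  define z where "z = (1 - t) *\<^sub>R x + t *\<^sub>R y"
  have "z \<in> S" unfolding z_def using convexD[OF assms(1) xy] t by simp
  then obtain K l where l: "linear l" and below: "\<forall>y\<in>S. K + l y \<le> F y" and eq: "K + l z = F z"
    using assms(2) by blast
  have "F z = K + l z" using eq by simp
  also have "\<dots> = (1 - t) * (K + l x) + t * (K + l y)"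
    unfolding z_def by (simp add: linear_add[OF l] linear_scale[OF l] linear_diff[OF l] algebra_simps)
  also have "\<dots> \<le> (1 - t) * F x + t * F y"
    using below xy t by (intro add_mono mult_left_mono) auto
  finally show "F ((1 - t) *\<^sub>R x + t *\<^sub>R y) \<le> (1 - t) * F x + t * F y" unfolding z_def .
qed

lemma lovasz_ext_supporting_affine:
  fixes f :: "real^'n::finite \<Rightarrow> real"
  assumes "0 < \<alpha>" "\<alpha> \<le> 1" "alpha_bisubmodular \<alpha> f" "z \<in> cube \<alpha>"
  shows "\<exists>K l. linear l \<and> (\<forall>y\<in>cube \<alpha>. K + l y \<le> lovasz_ext \<alpha> f y) \<and> K + l z = lovasz_ext \<alpha> f z"
proof -
  define s where "s = coord_sign \<alpha> z"
  obtain p where p: "bij_betw p {..<CARD('n)} UNIV"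
    and lam_z: "lam_chain \<alpha> z = chain_weights s (coord_weight \<alpha> z) p" "lam_chain \<alpha> z \<in> Pset \<alpha> z"
    using lam_chain_eq_chain_weights[OF assms(1,4)] unfolding s_def by blast
  define c where "c = chain_point s p"
  have s: "s i = 1 \<or> s i = -\<alpha>" for i unfolding s_def coord_sign_def by auto
  have s0: "s i \<noteq> 0" for i using s[of i] assms(1) by auto
  define coef where "coef j = (f (c (Suc j)) - f (c j)) / s (p j)" for j
  define l where "l y = (\<Sum>j<CARD('n). coef j * y $ p j)" for y :: "real^'n"
  define K where "K = f (c 0)"
  have l: "linear l" unfolding l_def
    by (intro linearI) (simp_all add: distrib_left sum.distrib sum_distrib_left mult.left_commute)
  have interpolates: "K + l (c k) = f (c k)" if k: "k \<le> CARD('n)" for k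
  proof -
    have inj: "inj_on p {..<CARD('n)}" using p unfolding bij_betw_def by simp
    have "l (c k) = (\<Sum>j<CARD('n). if j < k then f (c (Suc j)) - f (c j) else 0)"
      unfolding l_def coef_def c_def using chain_point_nth[OF inj _ k] s0 by (intro sum.cong refl) auto
    also have "\<dots> = (\<Sum>j<k. f (c (Suc j)) - f (c j))"
      using k by (intro sum.mono_neutral_cong_right) auto
    also have "\<dots> = f (c k) - K" unfolding K_def by (rule sum_lessThan_telescope)
    finally show ?thesis by simp
  qed
  have minorant: "K + l a \<le> f a" if "a \<in> Domn \<alpha>" for a
    using alpha_bisubmodular_nonneg[where s = s and p = p,
        OF assms(1,2) alpha_bisubmodular_minus_affine[where K = K, OF assms(3) l] s _ p that]
      interpolates unfolding c_def by simp
  have "K + l y \<le> lovasz_ext \<alpha> f y" if y: "y \<in> cube \<alpha>" for y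
  proof -
    have lam: "lam_chain \<alpha> y \<in> Pset \<alpha> y"
      using lam_chain_eq_chain_weights[OF assms(1) y] by blast
    have "K + l y = (\<Sum>a\<in>Domn \<alpha>. lam_chain \<alpha> y a * (K + l a))" by (rule Pset_affine_mean[OF l lam, symmetric])
    also have "\<dots> \<le> lovasz_ext \<alpha> f y" unfolding lovasz_ext_def
      using Pset_nonneg[OF lam] minorant by (intro sum_mono mult_left_mono) auto
    finally show ?thesis .
  qed
  moreover have "K + l z = lovasz_ext \<alpha> f z"
  proof -
    have "lam_chain \<alpha> z a * (K + l a) = lam_chain \<alpha> z a * f a" for a
      using chain_weights_support[of s "coord_weight \<alpha> z" p a] interpolates lam_z(1) unfolding c_def
      by (cases "lam_chain \<alpha> z a = 0") auto
    then show ?thesis unfolding lovasz_ext_def Pset_affine_mean[OF l lam_z(2), symmetric] by (simp only:)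
  qed
  ultimately show ?thesis using l by blast
qed

lemma alpha_bisubmodular_imp_convex:
  fixes f :: "real^'n::finite \<Rightarrow> real"
  assumes "0 < \<alpha>" "\<alpha> \<le> 1" "alpha_bisubmodular \<alpha> f"
  shows "convex_on (cube \<alpha>) (lovasz_ext \<alpha> f)"
  using convex_on_if_supporting_affine[OF convex_cube] lovasz_ext_supporting_affine[OF assms] by blast

theorem lemma2:
  fixes \<alpha> :: real and f :: "real ^ 'n::finite \<Rightarrow> real"
  assumes "0 < \<alpha>" and "\<alpha> \<le> 1"
  shows "convex_on (cube \<alpha>) (lovasz_ext \<alpha> f) \<longleftrightarrow> alpha_bisubmodular \<alpha> f"
  using convex_imp_alpha_bisubmodular alpha_bisubmodular_imp_convex assms by blast

end
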